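(* Let $L\subset\mathbb{R}^{2n}$ be a Lagrangian submanifold of the form $L=\{(q,\nabla F(q)):q\in\mathbb{R}^n\}$ for a cubic polynomial generating function $F:\mathbb{R}^n\to\mathbb{R}$. Then the outer symplectic billiard relation associated with $L$ is completely integrable: the $n$ functions $G_j(Q,P)=P_j-\frac{\partial F}{\partial Q_j}(Q)$, $j=1,\dots,n$, on $\mathbb{R}^{2n}$ pairwise Poisson commute and are invariant under the outer symplectic billiard relation, i.e. $G_j(A)=G_j(B)$ for all $j$ whenever $A,B\in\mathbb{R}^{2n}$ are in outer symplectic billiard relation with respect to $L$.
   Context: $\mathbb{R}^{2n}$ has coordinates $(Q,P)$, $Q,P\in\mathbb{R}^n$, and symplectic form $\omega=\sum_i dP_i\wedge dQ_i$. Two points $A,B\in\mathbb{R}^{2n}$ are in outer symplectic billiard relation with respect to $L$ if $X=\tfrac12(A+B)\in L$ and $B-A$ is symplectically orthogonal to $T_XL$; since $L$ is Lagrangian, this means $A=X+W$, $B=X-W$ for some $X\in L$, $W\in T_XL$. *)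

theory Defs
  imports "HOL-Analysis.Analysis"
begin

text \<open>R^n is real^'n; R^{2n} is (real^'n) \<times> (real^'n) with coordinates (Q,P).\<close>

definition cubic_poly :: "(real^'n \<Rightarrow> real) \<Rightarrow> bool" where
  "cubic_poly F \<longleftrightarrow> (\<exists>c b a t. \<forall>q.
     F q = c + (\<Sum>i\<in>UNIV. b i * q$i)
             + (\<Sum>i\<in>UNIV. \<Sum>j\<in>UNIV. a i j * q$i * q$j)
             + (\<Sum>i\<in>UNIV. \<Sum>j\<in>UNIV. \<Sum>k\<in>UNIV. t i j k * q$i * q$j * q$k))"

definition grad :: "(real^'n \<Rightarrow> real) \<Rightarrow> real^'n \<Rightarrow> real^'n" where
  "grad F q = (\<chi> j. frechet_derivative F (at q) (axis j 1))"

definition Lgraph :: "(real^'n \<Rightarrow> real) \<Rightarrow> ((real^'n) \<times> (real^'n)) set" where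
  "Lgraph F = {(q, grad F q) | q. True}"

definition tangent_space :: "(real^'n \<Rightarrow> real) \<Rightarrow> (real^'n) \<times> (real^'n) \<Rightarrow> ((real^'n) \<times> (real^'n)) set" where
  "tangent_space F X = range (frechet_derivative (\<lambda>q. (q, grad F q)) (at (fst X)))"

definition symp_form :: "(real^'n) \<times> (real^'n) \<Rightarrow> (real^'n) \<times> (real^'n) \<Rightarrow> real" where
  "symp_form u v = snd u \<bullet> fst v - snd v \<bullet> fst u"

definition outer_billiard_rel :: "(real^'n \<Rightarrow> real) \<Rightarrow> (real^'n) \<times> (real^'n) \<Rightarrow> (real^'n) \<times> (real^'n) \<Rightarrow> bool" where
  "outer_billiard_rel F A B \<longleftrightarrow>
     (let X = (1/2) *\<^sub>R (A + B) in
       X \<in> Lgraph F \<and> (\<forall>v\<in>tangent_space F X. symp_form (B - A) v = 0))"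

definition partial_Q :: "((real^'n) \<times> (real^'n) \<Rightarrow> real) \<Rightarrow> (real^'n) \<times> (real^'n) \<Rightarrow> 'n \<Rightarrow> real" where
  "partial_Q G x i = frechet_derivative G (at x) (axis i 1, 0)"

definition partial_P :: "((real^'n) \<times> (real^'n) \<Rightarrow> real) \<Rightarrow> (real^'n) \<times> (real^'n) \<Rightarrow> 'n \<Rightarrow> real" where
  "partial_P G x i = frechet_derivative G (at x) (0, axis i 1)"

definition poisson :: "((real^'n) \<times> (real^'n) \<Rightarrow> real) \<Rightarrow> ((real^'n) \<times> (real^'n) \<Rightarrow> real) \<Rightarrow> (real^'n) \<times> (real^'n) \<Rightarrow> real" where
  "poisson G H x = (\<Sum>i\<in>UNIV. partial_P G x i * partial_Q H x i - partial_Q G x i * partial_P H x i)"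

end

theory Submission
  imports Defs
begin

text \<open>Write \<open>g = \<nabla>F\<close>. As \<open>F\<close> is cubic, \<open>g\<close> is quadratic: its Jacobian at \<open>q\<close> is the
  Hessian \<open>H(q)\<close> of \<open>F\<close>, which is symmetric, and the central difference
  \<open>g(q + w) - g(q - w) = 2 H(q) w\<close> is exact. Symmetry of the Hessian gives
  \<open>{G\<^sub>i, G\<^sub>j} = H\<^sub>i\<^sub>j - H\<^sub>j\<^sub>i = 0\<close>. The tangent space of \<open>L\<close> at \<open>X = (q, g q)\<close> is
  \<open>{(h, H(q) h)}\<close>, which is its own symplectic orthogonal, so billiard-related points are
  \<open>A = X - (w, H(q) w)\<close> and \<open>B = X + (w, H(q) w)\<close>, and
  \<open>G(B) - G(A) = 2 H(q) w - (g(q + w) - g(q - w)) = 0\<close>.\<close>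

lemma has_derivative_vec_nth [derivative_intros]:
  "(f has_derivative f') F \<Longrightarrow> ((\<lambda>x. f x $ i) has_derivative (\<lambda>h. f' h $ i)) F"
  by (rule bounded_linear.has_derivative[OF bounded_linear_vec_nth])

lemma has_derivative_vec_lambda:
  fixes f :: "'a::real_normed_vector \<Rightarrow> 'n::finite \<Rightarrow> real"
  assumes "\<And>i. ((\<lambda>x. f x i) has_derivative (\<lambda>h. f' h $ i)) (at a within S)"
  shows "((\<lambda>x. \<chi> i. f x i) has_derivative f') (at a within S)"
proof (subst has_derivative_componentwise_within, intro ballI)
  fix e :: "real^'n"
  assume "e \<in> Basis"
  then obtain k where "e = axis k 1"
    unfolding Basis_vec_def by auto
  then show "((\<lambda>x. (\<chi> i. f x i) \<bullet> e) has_derivative (\<lambda>h. f' h \<bullet> e)) (at a within S)"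
    using assms[of k] by (simp add: inner_axis)
qed

lemma inner_matrix_vector_symmetric:
  fixes A :: "real^'n^'n"
  assumes "transpose A = A"
  shows "x \<bullet> (A *v y) = (A *v x) \<bullet> y"
  by (metis assms dot_lmul_matrix vector_transpose_matrix)

lemma poisson_graph_coordinates_commute:
  fixes g :: "real^'n \<Rightarrow> real^'n"
  assumes deriv: "(g has_derivative (\<lambda>h. J *v h)) (at (fst x))"
    and sym: "transpose J = J"
  shows "poisson (\<lambda>(Q, P). P $ i - g Q $ i) (\<lambda>(Q, P). P $ j - g Q $ j) x = 0"
proof -
  have "((\<lambda>y. g (fst y)) has_derivative (\<lambda>h. J *v fst h)) (at x)"
    using has_derivative_compose[OF has_derivative_fst[OF has_derivative_ident] deriv] .
  then have G_deriv: "((\<lambda>(Q, P). P $ j - g Q $ j) has_derivative (\<lambda>h. snd h $ j - (J *v fst h) $ j)) (at x)"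
    for j
    unfolding case_prod_beta'
    by (rule has_derivative_diff[OF has_derivative_vec_nth[OF has_derivative_snd[OF has_derivative_ident]]
        has_derivative_vec_nth])
  have D: "frechet_derivative (\<lambda>(Q, P). P $ j - g Q $ j) (at x) = (\<lambda>h. snd h $ j - (J *v fst h) $ j)" for j
    by (rule frechet_derivative_at[OF G_deriv, symmetric])
  have P: "partial_P (\<lambda>(Q, P). P $ j - g Q $ j) x k = of_bool (k = j)" for j k
    by (simp add: partial_P_def D axis_def)
  have Q: "partial_Q (\<lambda>(Q, P). P $ j - g Q $ j) x k = - J $ j $ k" for j k
    by (simp add: partial_Q_def D matrix_vector_mult_basis column_def)
  have "J $ j $ i = J $ i $ j"
    using arg_cong[OF sym, of "\<lambda>M. M $ i $ j"] by (simp add: transpose_def)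
  then show ?thesis
    by (simp add: poisson_def P Q sum_subtractf)
qed

lemma tangent_space_graph:
  assumes "(grad F has_derivative (\<lambda>h. J *v h)) (at q)"
  shows "tangent_space F (q, grad F q) = range (\<lambda>h. (h, J *v h))"
proof -
  have "((\<lambda>q. (q, grad F q)) has_derivative (\<lambda>h. (h, J *v h))) (at q)"
    by (intro has_derivative_Pair has_derivative_ident assms)
  then show ?thesis
    unfolding tangent_space_def by (simp flip: frechet_derivative_at)
qed

lemma outer_billiard_rel_graph_tangent:
  assumes deriv: "\<And>q. (grad F has_derivative (\<lambda>h. J q *v h)) (at q)"
    and sym: "\<And>q. transpose (J q) = J q"
    and rel: "outer_billiard_rel F A B"
  obtains q w where "A = (q - w, grad F q - J q *v w)" and "B = (q + w, grad F q + J q *v w)"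
proof -
  define X where "X = (1/2) *\<^sub>R (A + B)"
  define d where "d = B - A"
  from rel have "X \<in> Lgraph F" and orth: "\<forall>v\<in>tangent_space F X. symp_form d v = 0"
    unfolding outer_billiard_rel_def X_def d_def Let_def by auto
  then obtain q where X: "X = (q, grad F q)"
    unfolding Lgraph_def by auto
  have "snd d \<bullet> h = (J q *v fst d) \<bullet> h" for h
  proof -
    have "symp_form d (h, J q *v h) = 0"
      using orth by (simp add: X tangent_space_graph[OF deriv])
    then have "snd d \<bullet> h = fst d \<bullet> (J q *v h)"
      by (simp add: symp_form_def inner_commute)
    also have "\<dots> = (J q *v fst d) \<bullet> h"
      by (rule inner_matrix_vector_symmetric[OF sym])
    finally show ?thesis .
  qed
  then have jump: "snd d = J q *v fst d"
    using vector_eq_rdot by blast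
  define w where "w = (1/2) *\<^sub>R fst d"
  have half_d: "(1/2) *\<^sub>R d = (w, J q *v w)"
    by (simp add: w_def jump matrix_vector_mult_scaleR prod_eq_iff)
  have "A + B - (B - A) = A + A" and "A + B + (B - A) = B + B"
    by (simp_all add: algebra_simps)
  then have "X - (1/2) *\<^sub>R d = A" and "X + (1/2) *\<^sub>R d = B"
    unfolding X_def d_def by (simp_all only: scaleR_diff_right[symmetric] scaleR_add_right[symmetric]
        scaleR_half_double)
  then show thesis
    by (intro that) (auto simp: X half_d)
qed

lemma outer_billiard_rel_graph_coordinates_eq:
  assumes deriv: "\<And>q. (grad F has_derivative (\<lambda>h. J q *v h)) (at q)"
    and sym: "\<And>q. transpose (J q) = J q"
    and central_difference: "\<And>q w. grad F (q + w) - grad F (q - w) = 2 *\<^sub>R (J q *v w)"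
    and rel: "outer_billiard_rel F A B"
  shows "snd A - grad F (fst A) = snd B - grad F (fst B)"
proof -
  obtain q w where "A = (q - w, grad F q - J q *v w)" and "B = (q + w, grad F q + J q *v w)"
    using outer_billiard_rel_graph_tangent[OF deriv sym rel] .
  with central_difference[of q w] show ?thesis
    by (simp add: algebra_simps scaleR_2)
qed

definition cubic_polynomial ::
    "real \<Rightarrow> ('n \<Rightarrow> real) \<Rightarrow> ('n \<Rightarrow> 'n \<Rightarrow> real) \<Rightarrow> ('n \<Rightarrow> 'n \<Rightarrow> 'n \<Rightarrow> real) \<Rightarrow> real^'n \<Rightarrow> real"
  where "cubic_polynomial c b a t q = c + (\<Sum>i\<in>UNIV. b i * q$i)
             + (\<Sum>i\<in>UNIV. \<Sum>j\<in>UNIV. a i j * q$i * q$j)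
             + (\<Sum>i\<in>UNIV. \<Sum>j\<in>UNIV. \<Sum>k\<in>UNIV. t i j k * q$i * q$j * q$k)"

lemma cubic_poly_iff: "cubic_poly F \<longleftrightarrow> (\<exists>c b a t. F = cubic_polynomial c b a t)"
  unfolding cubic_poly_def cubic_polynomial_def by (simp add: fun_eq_iff)

lemma cubic_polynomial_symmetric_coeffs:
  obtains a' t' where "\<And>i j. a' i j = a' j i"
    and "\<And>i j k. t' i j k = t' j i k" and "\<And>i j k. t' i j k = t' i k j"
    and "cubic_polynomial c b a t = cubic_polynomial c b a' t'"
proof -
  define a' where "a' i j = (a i j + a j i) / 2" for i j
  define t' where "t' i j k = (t i j k + t i k j + t j i k + t j k i + t k i j + t k j i) / 6" for i j k
  let ?Q = "\<lambda>a q. \<Sum>i\<in>UNIV. \<Sum>j\<in>UNIV. a i j * (q$i * q$j :: real)"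
  let ?C = "\<lambda>t q. \<Sum>i\<in>UNIV. \<Sum>j\<in>UNIV. \<Sum>k\<in>UNIV. t i j k * (q$i * q$j * q$k :: real)"
  have Q_transpose: "?Q (\<lambda>i j. a j i) q = ?Q a q" for a q
    by (subst sum.swap) (simp add: mult_ac)
  have C_swap12: "?C (\<lambda>i j k. t j i k) q = ?C t q" for t q
    by (subst sum.swap) (simp add: mult_ac)
  have C_swap23: "?C (\<lambda>i j k. t i k j) q = ?C t q" for t q
    by (rule sum.cong[OF refl], subst sum.swap) (simp add: mult_ac)
  have "?Q a' q = (?Q a q + ?Q (\<lambda>i j. a j i) q) / 2" for q
    unfolding a'_def by (simp add: add_divide_distrib distrib_right sum.distrib sum_divide_distrib[symmetric])
  then have Q_eq: "?Q a' q = ?Q a q" for q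
    by (simp add: Q_transpose[of a])
  have "?C t' q = (?C t q + ?C (\<lambda>i j k. t i k j) q + ?C (\<lambda>i j k. t j i k) q + ?C (\<lambda>i j k. t j k i) q
      + ?C (\<lambda>i j k. t k i j) q + ?C (\<lambda>i j k. t k j i) q) / 6" for q
    unfolding t'_def by (simp add: add_divide_distrib distrib_right sum.distrib sum_divide_distrib[symmetric])
  \<comment> \<open>The swap rules are instantiated by hand: as simp rules they would loop.\<close>
  moreover have C_cycle: "?C (\<lambda>i j k. t j k i) q = ?C t q" for q
    using C_swap12[of "\<lambda>i j k. t i k j" q] C_swap23[of t q] by (rule trans)
  moreover have C_swap13: "?C (\<lambda>i j k. t k j i) q = ?C t q" for q
    using C_swap23[of "\<lambda>i j k. t j k i" q] C_cycle by (rule trans)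
  moreover have "?C (\<lambda>i j k. t k i j) q = ?C t q" for q
    using C_swap12[of "\<lambda>i j k. t k j i" q] C_swap13 by (rule trans)
  ultimately have C_eq: "?C t' q = ?C t q" for q
    by (simp add: C_swap12[of t] C_swap23[of t])
  have "cubic_polynomial c b a t = cubic_polynomial c b a' t'"
    using Q_eq C_eq by (simp add: cubic_polynomial_def fun_eq_iff mult.assoc)
  moreover have "a' i j = a' j i" "t' i j k = t' j i k" "t' i j k = t' i k j" for i j k
    unfolding a'_def t'_def by simp_all
  ultimately show thesis
    using that by blast
qed

locale symmetric_cubic_coeffs =
  fixes a :: "'n::finite \<Rightarrow> 'n \<Rightarrow> real" and t :: "'n \<Rightarrow> 'n \<Rightarrow> 'n \<Rightarrow> real"
  assumes a_sym: "a i j = a j i"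
    and t_swap12: "t i j k = t j i k"
    and t_swap23: "t i j k = t i k j"
begin

definition cubic_grad :: "('n \<Rightarrow> real) \<Rightarrow> real^'n \<Rightarrow> real^'n" where
  "cubic_grad b q = (\<chi> j. b j + 2 * (\<Sum>k\<in>UNIV. a j k * q$k)
                            + 3 * (\<Sum>k\<in>UNIV. \<Sum>l\<in>UNIV. t j k l * q$k * q$l))"

definition cubic_hessian :: "real^'n \<Rightarrow> real^'n^'n" where
  "cubic_hessian q = (\<chi> j k. 2 * a j k + 6 * (\<Sum>l\<in>UNIV. t j k l * q$l))"

lemma transpose_cubic_hessian: "transpose (cubic_hessian q) = cubic_hessian q"
  by (simp add: cubic_hessian_def transpose_def vec_eq_iff a_sym t_swap12)

lemma bilinear_sum_commute:
  "(\<Sum>i\<in>UNIV. \<Sum>j\<in>UNIV. a i j * (x$i * y$j)) = (\<Sum>i\<in>UNIV. \<Sum>j\<in>UNIV. a i j * (y$i * x$j))"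
  by (subst sum.swap) (simp add: a_sym mult_ac)

lemma trilinear_sum_swap12:
  "(\<Sum>i\<in>UNIV. \<Sum>j\<in>UNIV. \<Sum>k\<in>UNIV. t i j k * (x$i * y$j * z$k))
     = (\<Sum>i\<in>UNIV. \<Sum>j\<in>UNIV. \<Sum>k\<in>UNIV. t i j k * (y$i * x$j * z$k))"
  by (subst sum.swap) (simp add: t_swap12 mult_ac)

lemma trilinear_sum_swap23:
  "(\<Sum>i\<in>UNIV. \<Sum>j\<in>UNIV. \<Sum>k\<in>UNIV. t i j k * (x$i * y$j * z$k))
     = (\<Sum>i\<in>UNIV. \<Sum>j\<in>UNIV. \<Sum>k\<in>UNIV. t i j k * (x$i * z$j * y$k))"
  by (rule sum.cong[OF refl], subst sum.swap) (simp add: t_swap23 mult_ac)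

lemma hessian_row_sum_commute:
  "(\<Sum>k\<in>UNIV. \<Sum>l\<in>UNIV. t j k l * (x$k * y$l)) = (\<Sum>k\<in>UNIV. \<Sum>l\<in>UNIV. t j k l * (y$k * x$l))"
  by (subst sum.swap) (simp add: t_swap23[of j] mult_ac)

lemma has_derivative_cubic_polynomial:
  "(cubic_polynomial c b a t has_derivative (\<lambda>h. cubic_grad b q \<bullet> h)) (at q)"
proof -
  have "(cubic_polynomial c b a t has_derivative
      (\<lambda>h. (\<Sum>i\<in>UNIV. b i * h$i)
         + (\<Sum>i\<in>UNIV. \<Sum>j\<in>UNIV. a i j * (h$i * q$j + q$i * h$j))
         + (\<Sum>i\<in>UNIV. \<Sum>j\<in>UNIV. \<Sum>k\<in>UNIV.
              t i j k * (h$i * q$j * q$k + q$i * h$j * q$k + q$i * q$j * h$k)))) (at q)"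
    unfolding cubic_polynomial_def [abs_def]
    by (rule has_derivative_eq_rhs, (intro derivative_eq_intros, (rule refl)+)) (simp add: algebra_simps)
  moreover have "(\<Sum>i\<in>UNIV. b i * h$i)
         + (\<Sum>i\<in>UNIV. \<Sum>j\<in>UNIV. a i j * (h$i * q$j + q$i * h$j))
         + (\<Sum>i\<in>UNIV. \<Sum>j\<in>UNIV. \<Sum>k\<in>UNIV.
              t i j k * (h$i * q$j * q$k + q$i * h$j * q$k + q$i * q$j * h$k))
      = cubic_grad b q \<bullet> h" for h
  proof -
    have quadratic: "(\<Sum>i\<in>UNIV. \<Sum>j\<in>UNIV. a i j * (h$i * q$j + q$i * h$j))
        = 2 * (\<Sum>i\<in>UNIV. \<Sum>j\<in>UNIV. a i j * (h$i * q$j))"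
      using bilinear_sum_commute[of q h] by (simp add: distrib_left sum.distrib)
    have cubic: "(\<Sum>i\<in>UNIV. \<Sum>j\<in>UNIV. \<Sum>k\<in>UNIV.
              t i j k * (h$i * q$j * q$k + q$i * h$j * q$k + q$i * q$j * h$k))
        = 3 * (\<Sum>i\<in>UNIV. \<Sum>j\<in>UNIV. \<Sum>k\<in>UNIV. t i j k * (h$i * q$j * q$k))"
      using trilinear_sum_swap12[of q h q] trilinear_sum_swap23[of q q h] by (simp add: distrib_left sum.distrib)
    show ?thesis
      unfolding quadratic cubic
      by (simp add: cubic_grad_def inner_vec_def distrib_left sum.distrib sum_distrib_left mult_ac)
  qed
  ultimately show ?thesis
    by simp
qed

lemma grad_cubic_polynomial: "grad (cubic_polynomial c b a t) = cubic_grad b"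
  by (simp add: fun_eq_iff grad_def frechet_derivative_at[OF has_derivative_cubic_polynomial, symmetric]
      flip: cart_eq_inner_axis)

lemma has_derivative_cubic_grad:
  "(cubic_grad b has_derivative (\<lambda>h. cubic_hessian q *v h)) (at q)"
  unfolding cubic_grad_def
proof (rule has_derivative_vec_lambda)
  fix j
  have "((\<lambda>q. b j + 2 * (\<Sum>k\<in>UNIV. a j k * q$k) + 3 * (\<Sum>k\<in>UNIV. \<Sum>l\<in>UNIV. t j k l * q$k * q$l))
      has_derivative (\<lambda>h. 2 * (\<Sum>k\<in>UNIV. a j k * h$k)
         + 3 * (\<Sum>k\<in>UNIV. \<Sum>l\<in>UNIV. t j k l * (h$k * q$l + q$k * h$l)))) (at q)"
    by (rule has_derivative_eq_rhs, (intro derivative_eq_intros, (rule refl)+)) (simp add: algebra_simps)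
  moreover have "2 * (\<Sum>k\<in>UNIV. a j k * h$k) + 3 * (\<Sum>k\<in>UNIV. \<Sum>l\<in>UNIV. t j k l * (h$k * q$l + q$k * h$l))
      = (cubic_hessian q *v h) $ j" for h
  proof -
    have "(\<Sum>k\<in>UNIV. \<Sum>l\<in>UNIV. t j k l * (h$k * q$l + q$k * h$l))
        = 2 * (\<Sum>k\<in>UNIV. \<Sum>l\<in>UNIV. t j k l * (h$k * q$l))"
      using hessian_row_sum_commute[of j q h] by (simp add: distrib_left sum.distrib)
    then show ?thesis
      by (simp add: cubic_hessian_def matrix_vector_mult_def distrib_left distrib_right sum.distrib
          sum_distrib_left mult_ac)
  qed
  ultimately show "((\<lambda>q. b j + 2 * (\<Sum>k\<in>UNIV. a j k * q$k) + 3 * (\<Sum>k\<in>UNIV. \<Sum>l\<in>UNIV. t j k l * q$k * q$l))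
      has_derivative (\<lambda>h. (cubic_hessian q *v h) $ j)) (at q)"
    by simp
qed

lemma cubic_grad_central_difference:
  "cubic_grad b (q + w) - cubic_grad b (q - w) = 2 *\<^sub>R (cubic_hessian q *v w)"
proof -
  have "cubic_grad b (q + w) $ j - cubic_grad b (q - w) $ j = 2 * (cubic_hessian q *v w) $ j" for j
  proof -
    let ?L = "\<lambda>x. \<Sum>k\<in>UNIV. a j k * x$k"
    let ?Q = "\<lambda>x y. \<Sum>k\<in>UNIV. \<Sum>l\<in>UNIV. t j k l * (x$k * y$l)"
    have linear: "?L (q + w) - ?L (q - w) = 2 * ?L w"
      by (simp add: sum_subtractf[symmetric] sum_distrib_left algebra_simps)
    have "?Q (q + w) (q + w) - ?Q (q - w) (q - w) = 2 * ?Q w q + 2 * ?Q q w"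
      by (simp add: sum_subtractf[symmetric] sum_distrib_left sum.distrib[symmetric] algebra_simps)
    then have quadratic: "?Q (q + w) (q + w) - ?Q (q - w) (q - w) = 4 * ?Q w q"
      using hessian_row_sum_commute[of j q w] by simp
    have "cubic_grad b (q + w) $ j - cubic_grad b (q - w) $ j
        = 2 * (?L (q + w) - ?L (q - w)) + 3 * (?Q (q + w) (q + w) - ?Q (q - w) (q - w))"
      by (simp add: cubic_grad_def algebra_simps)
    also have "\<dots> = 2 * (cubic_hessian q *v w) $ j"
      unfolding linear quadratic
      by (simp add: cubic_hessian_def matrix_vector_mult_def distrib_left distrib_right sum.distrib
          sum_distrib_left mult_ac)
    finally show ?thesis .
  qed
  then show ?thesis
    by (simp add: vec_eq_iff)
qed

end

theorem mainTheorem5: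
  fixes F :: "real^'n \<Rightarrow> real"
  assumes "cubic_poly F"
  defines "G \<equiv> (\<lambda>j::'n. \<lambda>(Q::real^'n, P::real^'n). P$j - grad F Q $ j)"
  shows "(\<forall>i j x. poisson (G i) (G j) x = 0) \<and>
         (\<forall>A B. outer_billiard_rel F A B \<longrightarrow> (\<forall>j. G j A = G j B))"
proof -
  obtain c b a0 t0 where "F = cubic_polynomial c b a0 t0"
    using assms(1) by (auto simp: cubic_poly_iff)
  then obtain a t where "\<And>i j. a i j = a j i" "\<And>i j k. t i j k = t j i k" "\<And>i j k. t i j k = t i k j"
    and F: "F = cubic_polynomial c b a t"
    by (metis cubic_polynomial_symmetric_coeffs)
  then interpret symmetric_cubic_coeffs a t
    by unfold_locales
  have grad: "grad F = cubic_grad b"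
    by (simp add: F grad_cubic_polynomial)
  have deriv: "(grad F has_derivative (\<lambda>h. cubic_hessian q *v h)) (at q)" for q
    using has_derivative_cubic_grad by (simp add: grad)
  have central: "grad F (q + w) - grad F (q - w) = 2 *\<^sub>R (cubic_hessian q *v w)" for q w
    by (simp add: grad cubic_grad_central_difference)
  have "poisson (G i) (G j) x = 0" for i j x
    unfolding G_def by (rule poisson_graph_coordinates_commute[OF deriv transpose_cubic_hessian])
  moreover have "G j A = G j B" if "outer_billiard_rel F A B" for A B j
    using outer_billiard_rel_graph_coordinates_eq[OF deriv transpose_cubic_hessian central that]
    unfolding G_def by (simp add: case_prod_beta vec_eq_iff)
  ultimately show ?thesis
    by blast
qed

end
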